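(* Let $A_1,\dots,A_m\in\mathbb{C}^{n\times n}$ be Hermitian matrices. There do not exist $P\in\mathrm{GL}_n(\mathbb{C})$, $t\ge 2$ and positive integers $n_1,\dots,n_t$ with $\sum_jn_j=n$ such that every $P^*A_iP$ is block diagonal with diagonal blocks of sizes $n_1,\dots,n_t$ if and only if the only matrices $X\in Z(A_1,\dots,A_m)$ with $X^2=X$ are $0$ and $I_n$.
   Context: For Hermitian $A_1,\dots,A_m\in\mathbb{C}^{n\times n}$, the center is $Z(A_1,\dots,A_m)=\{X\in\mathbb{C}^{n\times n} : (A_iX)^*=A_iX \text{ for all } i\}$, where $^*$ denotes conjugate transpose. *)

theory Defs
  imports "Jordan_Normal_Form.Schur_Decomposition"
begin

text \<open>Conjugate transpose of a complex matrix is the library's mat_adjoint.\<close>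

definition hermitian_mat :: "complex mat \<Rightarrow> bool" where
  "hermitian_mat A \<longleftrightarrow> square_mat A \<and> mat_adjoint A = A"

definition center :: "nat \<Rightarrow> complex mat list \<Rightarrow> complex mat set" where
  "center n As = {X \<in> carrier_mat n n. \<forall>A \<in> set As. mat_adjoint (A * X) = A * X}"

text \<open>Indices i and j (0-based) lie in the same diagonal block, for consecutive
  blocks of sizes ns ! 0, ns ! 1, ... : no block boundary (partial sum) separates them.\<close>
definition same_block :: "nat list \<Rightarrow> nat \<Rightarrow> nat \<Rightarrow> bool" where
  "same_block ns i j \<longleftrightarrow>
     (\<forall>k \<le> length ns. (i < sum_list (take k ns)) = (j < sum_list (take k ns)))"

definition block_diag_with :: "nat list \<Rightarrow> complex mat \<Rightarrow> bool" where
  "block_diag_with ns M \<longleftrightarrow>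
     (\<forall>i < dim_row M. \<forall>j < dim_col M. \<not> same_block ns i j \<longrightarrow> M $$ (i, j) = 0)"

end

theory Submission
  imports Defs
begin

text \<open>Every idempotent X is similar to a coordinate projection E_r = diag(I_r, 0): triangularize X
  with the eigenvalue 1 listed first and then correct the columns. Writing X = P E_r P^-1 and
  M = P^* A P for Hermitian A, the product AX is congruent to M E_r, so AX is Hermitian iff M commutes
  with E_r, i.e. iff M is block diagonal with blocks of sizes r and n - r. Hence the idempotents of
  the center other than 0 and I (those with 0 < r < n) give such decompositions, and conversely a
  decomposition into t \<ge> 2 blocks gives the idempotent with r the size of the first block.\<close>

lemma mat_adjoint_carrier [simp]: "A \<in> carrier_mat m n \<Longrightarrow> mat_adjoint A \<in> carrier_mat n m"
  unfolding mat_adjoint_def by auto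

lemma dim_mat_adjoint [simp]:
  "dim_row (mat_adjoint A) = dim_col A" "dim_col (mat_adjoint A) = dim_row A"
  unfolding mat_adjoint_def by auto

lemma index_mat_adjoint [simp]:
  "i < dim_col A \<Longrightarrow> j < dim_row A \<Longrightarrow> mat_adjoint A $$ (i, j) = conjugate (A $$ (j, i))"
  unfolding mat_adjoint_def by (simp add: mat_of_rows_index)

lemma mat_adjoint_adjoint [simp]: "mat_adjoint (mat_adjoint (A :: complex mat)) = A"
  by (rule eq_matI) auto

lemma mat_adjoint_one [simp]: "mat_adjoint (1\<^sub>m n :: complex mat) = 1\<^sub>m n"
  by (rule eq_matI) auto

lemma mat_adjoint_mult:
  fixes A B :: "complex mat"
  assumes "A \<in> carrier_mat m n" "B \<in> carrier_mat n k"
  shows "mat_adjoint (A * B) = mat_adjoint B * mat_adjoint A"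
proof (rule eq_matI)
  fix i j assume "i < dim_row (mat_adjoint B * mat_adjoint A)" "j < dim_col (mat_adjoint B * mat_adjoint A)"
  with assms have i: "i < k" and j: "j < m" by auto
  have "mat_adjoint (A * B) $$ (i, j) = conjugate (\<Sum>l = 0..<n. A $$ (j, l) * B $$ (l, i))"
    using assms i j by (simp add: scalar_prod_def)
  also have "\<dots> = (\<Sum>l = 0..<n. conjugate (B $$ (l, i)) * conjugate (A $$ (j, l)))"
    by (simp add: sum_conjugate conjugate_dist_mul mult.commute)
  also have "\<dots> = (mat_adjoint B * mat_adjoint A) $$ (i, j)"
    using assms i j by (simp add: scalar_prod_def)
  finally show "mat_adjoint (A * B) $$ (i, j) = (mat_adjoint B * mat_adjoint A) $$ (i, j)" .
qed (use assms in auto)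

lemma invertible_mat_obtain_inverse:
  fixes P :: "'a :: semiring_1 mat"
  assumes P: "P \<in> carrier_mat n n" and "invertible_mat P"
  obtains Q where "Q \<in> carrier_mat n n" "P * Q = 1\<^sub>m n" "Q * P = 1\<^sub>m n"
proof -
  from \<open>invertible_mat P\<close> obtain Q where PQ: "P * Q = 1\<^sub>m (dim_row P)" and QP: "Q * P = 1\<^sub>m (dim_row Q)"
    unfolding invertible_mat_def inverts_mat_def by auto
  have "dim_col Q = n" using PQ P by (metis carrier_matD(1) index_mult_mat(3) index_one_mat(3))
  moreover have "dim_row Q = n" using QP P by (metis carrier_matD(2) index_mult_mat(3) index_one_mat(3))
  ultimately show ?thesis using that[of Q] PQ QP P by auto
qed

lemma similar_mat_wit_zero_iff:
  assumes "similar_mat_wit X E P Q" "X \<in> carrier_mat n n"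
  shows "X = 0\<^sub>m n n \<longleftrightarrow> E = 0\<^sub>m n n"
proof -
  note w = similar_mat_witD2[OF assms(2,1)]
  from similar_mat_witD2[OF w(5) similar_mat_wit_sym[OF assms(1)]] have "E = Q * X * P" by blast
  with w show ?thesis by auto
qed

lemma similar_mat_wit_one_iff:
  assumes "similar_mat_wit X E P Q" "X \<in> carrier_mat n n"
  shows "X = 1\<^sub>m n \<longleftrightarrow> E = 1\<^sub>m n"
proof -
  note w = similar_mat_witD2[OF assms(2,1)]
  from similar_mat_witD2[OF w(5) similar_mat_wit_sym[OF assms(1)]] have "E = Q * X * P" by blast
  with w show ?thesis by auto
qed

lemma hermitian_product_iff_commute_congruent:
  fixes A X E P Q :: "complex mat"
  assumes A: "A \<in> carrier_mat n n" "mat_adjoint A = A" and X: "X \<in> carrier_mat n n"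
    and sim: "similar_mat_wit X E P Q" and E: "mat_adjoint E = E"
  defines "M \<equiv> mat_adjoint P * A * P"
  shows "mat_adjoint (A * X) = A * X \<longleftrightarrow> E * M = M * E"
proof -
  note w = similar_mat_witD2[OF X sim]
  have [simp]: "E \<in> carrier_mat n n" "P \<in> carrier_mat n n" "Q \<in> carrier_mat n n"
    and M: "M \<in> carrier_mat n n" using w A unfolding M_def by auto
  note [simp] = assoc_mult_mat[of _ n n _ n _ n] mult_carrier_mat[of _ n n _ n] mat_adjoint_mult[of _ n n _ n]
  have adj_M: "mat_adjoint M = M" unfolding M_def using A by simp
  have congruent_back: "mat_adjoint P * (mat_adjoint Q * Y * Q) * P = Y"
    if "Y \<in> carrier_mat n n" for Y
  proof -
    have "mat_adjoint P * (mat_adjoint Q * Y * Q) * P = mat_adjoint (Q * P) * Y * (Q * P)"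
      using that by simp
    then show ?thesis unfolding w(2) using that by simp
  qed
  have "mat_adjoint Q * M * Q = mat_adjoint (P * Q) * A * (P * Q)"
    unfolding M_def using A by simp
  then have A_M: "A = mat_adjoint Q * M * Q" unfolding w(1) using A by simp
  have "A * X = mat_adjoint Q * M * (Q * P) * E * Q" unfolding A_M w(3) using M by simp
  then have AX: "A * X = mat_adjoint Q * (M * E) * Q" unfolding w(2) using M by simp
  have adj_AX: "mat_adjoint (A * X) = mat_adjoint Q * (E * M) * Q"
    unfolding AX using M by (simp add: adj_M E)
  show ?thesis
  proof
    assume "mat_adjoint (A * X) = A * X"
    then have "mat_adjoint Q * (E * M) * Q = mat_adjoint Q * (M * E) * Q" by (metis adj_AX AX)
    then show "E * M = M * E" using congruent_back[of "E * M"] congruent_back[of "M * E"] M by simp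
  qed (metis adj_AX AX)
qed

definition coord_proj :: "nat \<Rightarrow> nat \<Rightarrow> complex mat" where
  "coord_proj n r = mat n n (\<lambda>(i, j). if i = j \<and> i < r then 1 else 0)"

lemma coord_proj_carrier [simp]:
  "coord_proj n r \<in> carrier_mat n n" "dim_row (coord_proj n r) = n" "dim_col (coord_proj n r) = n"
  unfolding coord_proj_def by auto

lemma index_coord_proj [simp]:
  "i < n \<Longrightarrow> j < n \<Longrightarrow> coord_proj n r $$ (i, j) = (if i = j \<and> i < r then 1 else 0)"
  unfolding coord_proj_def by auto

lemma mat_adjoint_coord_proj [simp]: "mat_adjoint (coord_proj n r) = coord_proj n r"
  by (rule eq_matI) auto

lemma index_mult_coord_proj:
  assumes "M \<in> carrier_mat m n" "i < m" "j < n"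
  shows "(M * coord_proj n r) $$ (i, j) = (if j < r then M $$ (i, j) else 0)"
proof -
  have "(M * coord_proj n r) $$ (i, j) = (\<Sum>k = 0..<n. M $$ (i, k) * (if k = j \<and> k < r then 1 else 0))"
    using assms by (simp add: scalar_prod_def)
  also have "\<dots> = (\<Sum>k = 0..<n. if k = j then (if j < r then M $$ (i, j) else 0) else 0)"
    by (rule sum.cong) auto
  finally show ?thesis using assms by simp
qed

lemma index_coord_proj_mult:
  assumes "M \<in> carrier_mat n m" "i < n" "j < m"
  shows "(coord_proj n r * M) $$ (i, j) = (if i < r then M $$ (i, j) else 0)"
proof -
  have "(coord_proj n r * M) $$ (i, j) = (\<Sum>k = 0..<n. (if i = k \<and> i < r then 1 else 0) * M $$ (k, j))"
    using assms by (simp add: scalar_prod_def)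
  also have "\<dots> = (\<Sum>k = 0..<n. if k = i then (if i < r then M $$ (i, j) else 0) else 0)"
    by (rule sum.cong) auto
  finally show ?thesis using assms by simp
qed

lemma coord_proj_idempotent: "coord_proj n r * coord_proj n r = coord_proj n r"
proof (rule eq_matI)
  fix i j assume "i < dim_row (coord_proj n r)" "j < dim_col (coord_proj n r)"
  then show "(coord_proj n r * coord_proj n r) $$ (i, j) = coord_proj n r $$ (i, j)"
    by (subst index_coord_proj_mult[of _ n n]) auto
qed auto

lemma coord_proj_eq_zero_iff:
  assumes "r \<le> n"
  shows "coord_proj n r = 0\<^sub>m n n \<longleftrightarrow> r = 0"
proof
  assume zero: "coord_proj n r = 0\<^sub>m n n"
  show "r = 0"
  proof (rule ccontr)
    assume "r \<noteq> 0"
    with assms have "coord_proj n r $$ (0, 0) = 1" by simp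
    with zero \<open>r \<noteq> 0\<close> assms show False by simp
  qed
qed (auto intro: eq_matI)

lemma coord_proj_eq_one_iff:
  assumes "r \<le> n"
  shows "coord_proj n r = 1\<^sub>m n \<longleftrightarrow> r = n"
proof
  assume one: "coord_proj n r = 1\<^sub>m n"
  show "r = n"
  proof (rule ccontr)
    assume "r \<noteq> n"
    with assms have "coord_proj n r $$ (r, r) = 0" by simp
    with one \<open>r \<noteq> n\<close> assms show False by simp
  qed
qed (auto intro: eq_matI)

lemma commute_coord_proj_iff:
  assumes M: "M \<in> carrier_mat n n"
  shows "coord_proj n r * M = M * coord_proj n r \<longleftrightarrow>
    (\<forall>i < n. \<forall>j < n. (i < r) \<noteq> (j < r) \<longrightarrow> M $$ (i, j) = 0)"
proof
  assume comm: "coord_proj n r * M = M * coord_proj n r"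
  show "\<forall>i < n. \<forall>j < n. (i < r) \<noteq> (j < r) \<longrightarrow> M $$ (i, j) = 0"
  proof (intro allI impI)
    fix i j assume "i < n" "j < n" "(i < r) \<noteq> (j < r)"
    moreover have "(coord_proj n r * M) $$ (i, j) = (M * coord_proj n r) $$ (i, j)" using comm by simp
    ultimately show "M $$ (i, j) = 0"
      by (auto simp: index_coord_proj_mult[OF M] index_mult_coord_proj[OF M])
  qed
next
  assume zero: "\<forall>i < n. \<forall>j < n. (i < r) \<noteq> (j < r) \<longrightarrow> M $$ (i, j) = 0"
  show "coord_proj n r * M = M * coord_proj n r"
  proof (rule eq_matI)
    fix i j assume "i < dim_row (M * coord_proj n r)" "j < dim_col (M * coord_proj n r)"
    with M have i: "i < n" and j: "j < n" by auto
    show "(coord_proj n r * M) $$ (i, j) = (M * coord_proj n r) $$ (i, j)"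
      by (subst index_coord_proj_mult[OF M i j], subst index_mult_coord_proj[OF M i j])
        (use zero i j in auto)
  qed (use M in auto)
qed

lemma same_block_two_iff:
  assumes "i < r + s" "j < r + s"
  shows "same_block [r, s] i j \<longleftrightarrow> (i < r) = (j < r)"
proof
  assume "same_block [r, s] i j"
  then have "(i < sum_list (take 1 [r, s])) = (j < sum_list (take 1 [r, s]))"
    unfolding same_block_def by (drule_tac x = 1 in spec) simp
  then show "(i < r) = (j < r)" by simp
next
  assume eq: "(i < r) = (j < r)"
  show "same_block [r, s] i j" unfolding same_block_def
  proof (intro allI impI)
    fix k assume "k \<le> length [r, s]"
    then have "k = 0 \<or> k = 1 \<or> k = 2" by auto
    then show "(i < sum_list (take k [r, s])) = (j < sum_list (take k [r, s]))"
      using assms eq by auto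
  qed
qed

lemma block_diag_with_two_iff_commute:
  assumes M: "M \<in> carrier_mat n n" and r: "r \<le> n"
  shows "block_diag_with [r, n - r] M \<longleftrightarrow> coord_proj n r * M = M * coord_proj n r"
  using M r by (auto simp: commute_coord_proj_iff block_diag_with_def same_block_two_iff)

lemma block_diag_with_Cons_commute:
  assumes M: "M \<in> carrier_mat n n" and bd: "block_diag_with (a # ns) M"
  shows "coord_proj n a * M = M * coord_proj n a"
  unfolding commute_coord_proj_iff[OF M]
proof (intro allI impI)
  fix i j assume "i < n" "j < n" "(i < a) \<noteq> (j < a)"
  moreover from this(3) have "\<not> same_block (a # ns) i j"
    unfolding same_block_def by (auto dest: spec[where x = 1])
  ultimately show "M $$ (i, j) = 0" using bd M unfolding block_diag_with_def by auto
qed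

lemma upper_triangular_idempotent_diag:
  fixes B :: "'a :: idom mat"
  assumes B: "B \<in> carrier_mat n n" "upper_triangular B" "B * B = B" and i: "i < n"
  shows "B $$ (i, i) = 0 \<or> B $$ (i, i) = 1"
proof -
  have "B $$ (i, i) = (B * B) $$ (i, i)" using B by simp
  also have "\<dots> = (\<Sum>k = 0..<n. B $$ (i, k) * B $$ (k, i))"
    using B(1) i by (simp add: scalar_prod_def)
  also have "\<dots> = (\<Sum>k = 0..<n. if k = i then B $$ (i, i) * B $$ (i, i) else 0)"
    using B i by (intro sum.cong) (auto simp: upper_triangular_def dest: linorder_neqE_nat)
  finally have "B $$ (i, i) = B $$ (i, i) * B $$ (i, i)" using i by simp
  then show ?thesis by (metis mult_cancel_left1 mult_zero_left)
qed

lemma schur_decomposition_value_first: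
  fixes X :: "complex mat"
  assumes X: "X \<in> carrier_mat n n"
  obtains B P Q r where "similar_mat_wit X B P Q" "upper_triangular B" "r \<le> n"
    "\<And>i. i < n \<Longrightarrow> B $$ (i, i) = c \<longleftrightarrow> i < r"
proof -
  obtain es where "char_poly X = (\<Prod>e \<leftarrow> es. [:- e, 1:])" using char_poly_factorized[OF X] by auto
  define es' where "es' = filter (\<lambda>e. e = c) es @ filter (\<lambda>e. e \<noteq> c) es"
  define r where "r = length (filter (\<lambda>e. e = c) es)"
  have "(\<Prod>e \<leftarrow> es'. f e) = (\<Prod>e \<leftarrow> es. f e)" for f :: "complex \<Rightarrow> complex poly"
    unfolding es'_def by (induct es) (auto simp: mult_ac)
  with \<open>char_poly X = _\<close> have cp: "char_poly X = (\<Prod>e \<leftarrow> es'. [:- e, 1:])" by simp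
  obtain B P Q where "schur_decomposition X es' = (B, P, Q)" by (cases "schur_decomposition X es'")
  from schur_decomposition[OF X cp this] have sim: "similar_mat_wit X B P Q"
    and ut: "upper_triangular B" and diag: "diag_mat B = es'" by auto
  have B: "B \<in> carrier_mat n n" using similar_mat_witD2[OF X sim] by auto
  have len: "length es' = n" using diag B unfolding diag_mat_def by auto
  have "B $$ (i, i) = c \<longleftrightarrow> i < r" if i: "i < n" for i
  proof -
    have "B $$ (i, i) = es' ! i" using i B unfolding diag[symmetric] diag_mat_def by simp
    moreover have "es' ! i = c" if "i < r"
      using that nth_mem[of i "filter (\<lambda>e. e = c) es"] unfolding es'_def r_def
      by (auto simp: nth_append)
    moreover have "es' ! i \<noteq> c" if "\<not> i < r"
      using that i len nth_mem[of "i - r" "filter (\<lambda>e. e \<noteq> c) es"] unfolding es'_def r_def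
      by (auto simp: nth_append)
    ultimately show ?thesis by auto
  qed
  moreover have "r \<le> n" using len unfolding r_def es'_def by simp
  ultimately show ?thesis using that sim ut by blast
qed

lemma upper_triangular_nonzero_diag_obtain_inverse:
  fixes S :: "'a :: field mat"
  assumes S: "S \<in> carrier_mat n n" "upper_triangular S" and diag: "\<And>i. i < n \<Longrightarrow> S $$ (i, i) \<noteq> 0"
  obtains T where "T \<in> carrier_mat n n" "S * T = 1\<^sub>m n" "T * S = 1\<^sub>m n"
proof -
  have "det S = prod_list (diag_mat S)" by (rule det_upper_triangular[OF S(2,1)])
  also have "\<dots> \<noteq> 0" using S diag unfolding diag_mat_def prod_list_zero_iff by auto
  finally have "S \<in> Units (ring_mat TYPE('a) n undefined)" by (rule det_non_zero_imp_unit[OF S(1)])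
  then show ?thesis using that unfolding Units_def ring_mat_simps by auto
qed

text \<open>Columns j < r of the witness S come from B, the others from I - B: S is unit upper
  triangular, and B S = S E_r because B B = B and B (I - B) = 0.\<close>

lemma upper_triangular_idempotent_similar_coord_proj:
  fixes B :: "complex mat"
  assumes B: "B \<in> carrier_mat n n" "upper_triangular B" "B * B = B"
    and diag: "\<And>i. i < n \<Longrightarrow> B $$ (i, i) = (if i < r then 1 else 0)"
  obtains S T where "similar_mat_wit B (coord_proj n r) S T"
proof -
  define S where "S = mat n n (\<lambda>(i, j). if j < r then B $$ (i, j) else (1\<^sub>m n - B) $$ (i, j))"
  have S: "S \<in> carrier_mat n n" unfolding S_def by simp
  have col_S: "col S j = (if j < r then col B j else col (1\<^sub>m n - B) j)" if "j < n" for j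
    using that B by (intro eq_vecI) (auto simp: S_def)
  have "upper_triangular S" using B unfolding S_def upper_triangular_def by auto
  moreover have "S $$ (i, i) \<noteq> 0" if "i < n" for i using that B diag by (simp add: S_def)
  ultimately obtain T where T: "T \<in> carrier_mat n n" "S * T = 1\<^sub>m n" "T * S = 1\<^sub>m n"
    using upper_triangular_nonzero_diag_obtain_inverse S by blast
  have B_1B: "B * (1\<^sub>m n - B) = 0\<^sub>m n n"
    using B by (simp add: mult_minus_distrib_mat[OF B(1) one_carrier_mat B(1)])
  have BS: "B * S = S * coord_proj n r"
  proof (rule eq_matI)
    fix i j assume "i < dim_row (S * coord_proj n r)" "j < dim_col (S * coord_proj n r)"
    with S have i: "i < n" and j: "j < n" by auto
    have "(B * S) $$ (i, j) = (if j < r then (B * B) $$ (i, j) else (B * (1\<^sub>m n - B)) $$ (i, j))"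
      using B(1) S i j col_S[OF j] by simp
    also have "\<dots> = (S * coord_proj n r) $$ (i, j)"
      using B i j by (subst index_mult_coord_proj[OF S i j]) (simp add: B_1B S_def)
    finally show "(B * S) $$ (i, j) = (S * coord_proj n r) $$ (i, j)" .
  qed (use B S in auto)
  have "B = B * (S * T)" using B(1) T(2) by simp
  also have "\<dots> = S * coord_proj n r * T"
    using B(1) S T(1) by (simp add: BS[symmetric] assoc_mult_mat[of _ n n _ n _ n])
  finally have "B = S * coord_proj n r * T" .
  with S T have "similar_mat_wit B (coord_proj n r) S T" using B(1) by (intro similar_mat_witI) auto
  then show ?thesis by (rule that)
qed

lemma idempotent_similar_coord_proj:
  fixes X :: "complex mat"
  assumes X: "X \<in> carrier_mat n n" and idem: "X * X = X"
  obtains r P Q where "r \<le> n" "similar_mat_wit X (coord_proj n r) P Q"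
proof -
  obtain B P Q r where sim: "similar_mat_wit X B P Q" and ut: "upper_triangular B" and r: "r \<le> n"
    and ones: "\<And>i. i < n \<Longrightarrow> B $$ (i, i) = 1 \<longleftrightarrow> i < r"
    using schur_decomposition_value_first[OF X] by blast
  have B: "B \<in> carrier_mat n n" using similar_mat_witD2[OF X sim] by auto
  note w = similar_mat_witD2[OF X sim]
  have "B = Q * X * P" using similar_mat_witD2(3)[OF B similar_mat_wit_sym[OF sim]] .
  then have "B * B = Q * X * (P * Q) * X * P"
    using X w(6,7) by (simp add: assoc_mult_mat[of _ n n _ n _ n] mult_carrier_mat[of _ n n _ n])
  also have "\<dots> = Q * (X * X) * P"
    unfolding w(1) using X w(7) by (simp add: assoc_mult_mat[of _ n n _ n _ n])
  finally have "B * B = B" unfolding idem \<open>B = Q * X * P\<close>[symmetric] .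
  then have "B $$ (i, i) = (if i < r then 1 else 0)" if "i < n" for i
    using upper_triangular_idempotent_diag[OF B ut _ that] ones[OF that] by auto
  then obtain S T where "similar_mat_wit B (coord_proj n r) S T"
    using upper_triangular_idempotent_similar_coord_proj[OF B ut \<open>B * B = B\<close>] by blast
  from similar_mat_wit_trans[OF sim this] r that show ?thesis by blast
qed

lemma block_diag_of_nontrivial_central_idempotent:
  fixes As :: "complex mat list" and X :: "complex mat"
  assumes As: "\<forall>A \<in> set As. A \<in> carrier_mat n n \<and> hermitian_mat A"
    and X: "X \<in> center n As" "X * X = X" "X \<noteq> 0\<^sub>m n n" "X \<noteq> 1\<^sub>m n"
  obtains P ns where "P \<in> carrier_mat n n" "invertible_mat P" "length ns \<ge> 2"
    "\<forall>k \<in> set ns. k > 0" "sum_list ns = n" "\<forall>A \<in> set As. block_diag_with ns (mat_adjoint P * A * P)"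
proof -
  have Xc: "X \<in> carrier_mat n n" using X(1) unfolding center_def by auto
  obtain r P Q where r: "r \<le> n" and sim: "similar_mat_wit X (coord_proj n r) P Q"
    using idempotent_similar_coord_proj[OF Xc X(2)] by blast
  note w = similar_mat_witD2[OF Xc sim]
  have "r \<noteq> 0" "r \<noteq> n"
    using X(3,4) similar_mat_wit_zero_iff[OF sim Xc] similar_mat_wit_one_iff[OF sim Xc]
      coord_proj_eq_zero_iff[OF r] coord_proj_eq_one_iff[OF r] by auto
  have "invertible_mat P" using w unfolding invertible_mat_def inverts_mat_def by auto
  have "block_diag_with [r, n - r] (mat_adjoint P * A * P)" if "A \<in> set As" for A
  proof -
    from that As have A: "A \<in> carrier_mat n n" "mat_adjoint A = A" unfolding hermitian_mat_def by auto
    from that X(1) have "mat_adjoint (A * X) = A * X" unfolding center_def by auto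
    moreover have "mat_adjoint P * A * P \<in> carrier_mat n n" using A w(6) by auto
    ultimately show ?thesis
      using hermitian_product_iff_commute_congruent[OF A Xc sim mat_adjoint_coord_proj]
        block_diag_with_two_iff_commute[OF _ r] by simp
  qed
  then show ?thesis using that[of P "[r, n - r]"] w \<open>invertible_mat P\<close> r \<open>r \<noteq> 0\<close> \<open>r \<noteq> n\<close> by auto
qed

lemma nontrivial_central_idempotent_of_block_diag:
  fixes As :: "complex mat list" and P :: "complex mat"
  assumes As: "\<forall>A \<in> set As. A \<in> carrier_mat n n \<and> hermitian_mat A"
    and P: "P \<in> carrier_mat n n" "invertible_mat P" and ns: "length ns \<ge> 2"
    "\<forall>k \<in> set ns. k > 0" "sum_list ns = n"
    and bd: "\<forall>A \<in> set As. block_diag_with ns (mat_adjoint P * A * P)"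
  obtains X where "X \<in> center n As" "X * X = X" "X \<noteq> 0\<^sub>m n n" "X \<noteq> 1\<^sub>m n"
proof -
  obtain Q where Q: "Q \<in> carrier_mat n n" "P * Q = 1\<^sub>m n" "Q * P = 1\<^sub>m n"
    using invertible_mat_obtain_inverse[OF P] by blast
  obtain a b rest where ns_Cons: "ns = a # b # rest" using ns(1)
    by (metis Suc_le_length_iff numeral_2_eq_2)
  have a: "0 < a" "a \<le> n" "a \<noteq> n" using ns ns_Cons by auto
  define X where "X = P * coord_proj n a * Q"
  have Xc: "X \<in> carrier_mat n n" unfolding X_def using P Q by auto
  have sim: "similar_mat_wit X (coord_proj n a) P Q"
    using P Q Xc unfolding X_def by (intro similar_mat_witI) auto
  have "X * X = P * coord_proj n a * (Q * P) * coord_proj n a * Q"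
    unfolding X_def using P Q(1) by (simp add: assoc_mult_mat[of _ n n _ n _ n] mult_carrier_mat[of _ n n _ n])
  also have "\<dots> = X"
    unfolding Q(3) X_def using P Q by (simp add: assoc_mult_mat[of _ n n _ n _ n] coord_proj_idempotent)
  finally have "X * X = X" .
  moreover have "X \<noteq> 0\<^sub>m n n" "X \<noteq> 1\<^sub>m n"
    using a similar_mat_wit_zero_iff[OF sim Xc] similar_mat_wit_one_iff[OF sim Xc]
      coord_proj_eq_zero_iff[OF a(2)] coord_proj_eq_one_iff[OF a(2)] by auto
  moreover have "mat_adjoint (A * X) = A * X" if "A \<in> set As" for A
  proof -
    from that As have A: "A \<in> carrier_mat n n" "mat_adjoint A = A" unfolding hermitian_mat_def by auto
    have "mat_adjoint P * A * P \<in> carrier_mat n n" using A P by auto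
    with that bd ns_Cons show ?thesis
      using hermitian_product_iff_commute_congruent[OF A Xc sim mat_adjoint_coord_proj]
        block_diag_with_Cons_commute by auto
  qed
  ultimately show ?thesis using that Xc unfolding center_def by auto
qed

theorem mainTheorem8:
  fixes n :: nat and As :: "complex mat list"
  assumes "\<forall>A \<in> set As. A \<in> carrier_mat n n \<and> hermitian_mat A"
  shows "(\<not> (\<exists>P ns. P \<in> carrier_mat n n \<and> invertible_mat P \<and> length ns \<ge> 2 \<and>
                   (\<forall>k \<in> set ns. k > 0) \<and> sum_list ns = n \<and>
                   (\<forall>A \<in> set As. block_diag_with ns (mat_adjoint P * A * P))))
         \<longleftrightarrow> (\<forall>X \<in> center n As. X * X = X \<longrightarrow> X = 0\<^sub>m n n \<or> X = 1\<^sub>m n)"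
proof
  assume no_block: "\<not> (\<exists>P ns. P \<in> carrier_mat n n \<and> invertible_mat P \<and> length ns \<ge> 2 \<and>
                   (\<forall>k \<in> set ns. k > 0) \<and> sum_list ns = n \<and>
                   (\<forall>A \<in> set As. block_diag_with ns (mat_adjoint P * A * P)))"
  show "\<forall>X \<in> center n As. X * X = X \<longrightarrow> X = 0\<^sub>m n n \<or> X = 1\<^sub>m n"
  proof (intro ballI impI)
    fix X assume "X \<in> center n As" "X * X = X"
    with no_block show "X = 0\<^sub>m n n \<or> X = 1\<^sub>m n"
      using block_diag_of_nontrivial_central_idempotent[OF assms, of X] by blast
  qed
next
  assume "\<forall>X \<in> center n As. X * X = X \<longrightarrow> X = 0\<^sub>m n n \<or> X = 1\<^sub>m n"
  then show "\<not> (\<exists>P ns. P \<in> carrier_mat n n \<and> invertible_mat P \<and> length ns \<ge> 2 \<and>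
                   (\<forall>k \<in> set ns. k > 0) \<and> sum_list ns = n \<and>
                   (\<forall>A \<in> set As. block_diag_with ns (mat_adjoint P * A * P)))"
    using nontrivial_central_idempotent_of_block_diag[OF assms] by metis
qed

end
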